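(* Let $p$ be a prime, $r\geq 1$ and $d\geq 0$. Then $$\prod_{\lambda\in\mathrm{Par}(d)}\vartheta_{p^r}(\lambda)=p^{\,r\,l(d)},$$ i.e. $\sum_{\lambda\in\mathrm{Par}(d)}\log_p\vartheta_{p^r}(\lambda)=r\,l(d)$. (Equivalently, the product equals $\det X_{p^r,d}$.)
   Context: $\mathrm{Par}(d)$ is the set of partitions of $d$; for a partition $\lambda$, $m_n(\lambda)$ is the multiplicity of $n$ as a part and $l(\lambda)$ the number of parts; $l(d)=\sum_{\lambda\in\mathrm{Par}(d)}l(\lambda)$ is the total length function. $\nu_p$ is the $p$-adic valuation. For an integer $a\geq 0$ let $d_p(a)=\sum_{j\geq1}\lfloor a/p^j\rfloor$ (so $p^{d_p(a)}$ is the $p$-part of $a!$). Define $$\vartheta_{p^r}(\lambda)=\prod_{\substack{n\geq1\\ 0\leq\nu_p(n)<r}}p^{(r-\nu_p(n))m_n(\lambda)+d_p(m_n(\lambda))}.$$ Also $X_{p^r,d}=(\langle m_\lambda,h_\mu\rangle_{p^r})_{\lambda,\mu\in\mathrm{Par}(d)}$, where $\langle p_\lambda,p_\mu\rangle_{\ell}=\delta_{\lambda\mu}\ell^{l(\lambda)}z_\lambda$ on symmetric functions ($m,h,p$ the monomial, complete homogeneous and power-sum bases, $z_\lambda=\prod_r r^{m_r(\lambda)}m_r(\lambda)!$). *)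

theory Defs
  imports "HOL-Library.Multiset" "HOL-Computational_Algebra.Primes"
begin

text \<open>Partitions of d, represented as multisets of positive parts summing to d.
  The multiplicity m_n(lambda) is count lambda n and l(lambda) is size lambda.\<close>
definition Par :: "nat \<Rightarrow> nat multiset set" where
  "Par d = {M. (\<forall>x\<in>#M. 0 < x) \<and> sum_mset M = d}"

definition total_length :: "nat \<Rightarrow> nat" where
  "total_length d = (\<Sum>M\<in>Par d. size M)"

text \<open>d_p(a) = sum_{j>=1} floor(a/p^j); terms with j > a vanish (p >= 2).\<close>
definition dp :: "nat \<Rightarrow> nat \<Rightarrow> nat" where
  "dp p a = (\<Sum>j\<in>{1..a}. a div p ^ j)"

text \<open>theta_{p^r}(lambda); factors with m_n(lambda) = 0 equal 1, so the product
  is restricted to the (finite) set of parts of lambda.\<close>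
definition theta :: "nat \<Rightarrow> nat \<Rightarrow> nat multiset \<Rightarrow> nat" where
  "theta p r M = (\<Prod>n\<in>{n\<in>set_mset M. 1 \<le> n \<and> multiplicity p n < r}.
      p ^ ((r - multiplicity p n) * count M n + dp p (count M n)))"

end

theory Submission
  imports Defs
begin

(*
  Write v = multiplicity p and m_n(M) = count M n.  Taking logarithms base p,
  the theorem says that the exponents
      e(M) = \<Sum>{n part of M, v n < r}. (r - v n) * m_n(M) + d_p(m_n(M))
  add up, over all partitions M of d, to r * l(d).

  The argument is a double-counting one.  Let F(N) be the total number of
  occurrences of N as a part among all partitions of d, so l(d) = \<Sum>N. F(N).
   1. Removing k*q copies of N (resp. k copies of q*N) gives bijections with
      partitions of d - k*q*N, hence \<Sum>M. m_N(M) div q = F(q*N).  Since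
      d_p(c) = \<Sum>j\<ge>1. c div p^j, summing e(M) over M yields
        \<Sum>{n, v n < r}. (r - v n) * F(n) + \<Sum>j\<ge>1. F(p^j * n).
   2. A part N with v N = w arises as p^j * n with j \<ge> 1 and v n < r in
      exactly min w r ways; together with the weight r - w (present only when
      w < r) every F(N) receives total weight r.
*)

lemma Par_count_times_part_le:
  assumes "M \<in> Par d"
  shows "count M n * n \<le> d"
proof -
  have sub: "replicate_mset (count M n) n \<subseteq># M"
    by (simp flip: count_le_replicate_mset_subset_eq)
  have "sum_mset M = sum_mset (replicate_mset (count M n) n)
                     + sum_mset (M - replicate_mset (count M n) n)"
    by (metis sub subset_mset.add_diff_inverse sum_mset.union)
  then show ?thesis
    using assms unfolding Par_def by simp
qed

lemma Par_part_range:
  assumes "M \<in> Par d" and "n \<in># M"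
  shows "n \<in> {1..d}"
proof -
  have "0 < n" using assms unfolding Par_def by auto
  moreover have "n \<le> count M n * n"
    using assms(2) by simp
  then have "n \<le> d"
    using Par_count_times_part_le[OF assms(1), of n] by linarith
  ultimately show ?thesis by simp
qed

lemma Par_count_le:
  assumes "M \<in> Par d"
  shows "count M n \<le> d"
proof (cases "n \<in># M")
  case True
  then have "count M n \<le> count M n * n"
    using Par_part_range[OF assms] by simp
  then show ?thesis using Par_count_times_part_le[OF assms, of n] by linarith
next
  case False
  then show ?thesis by (simp add: not_in_iff)
qed

lemma size_Par_eq_sum_count:
  assumes "M \<in> Par d"
  shows "size M = (\<Sum>n\<in>{1..d}. count M n)"
  unfolding size_multiset_overloaded_eq
  by (rule sum.mono_neutral_left) (use Par_part_range[OF assms] in \<open>auto simp: not_in_iff\<close>)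

lemma finite_Par: "finite (Par d)"
proof (rule finite_subset)
  show "Par d \<subseteq> (\<Union>k\<le>d. multisets_of_size {1..d} k)"
  proof
    fix M assume M: "M \<in> Par d"
    have "size M = (\<Sum>x\<in>#M. 1)" by (rule size_eq_sum_mset)
    also have "\<dots> \<le> sum_mset M"
      using sum_mset_mono[of M "\<lambda>x. 1" "\<lambda>x. x"] M unfolding Par_def
      by (simp add: Suc_le_eq)
    also have "\<dots> = d" using M unfolding Par_def by simp
    finally show "M \<in> (\<Union>k\<le>d. multisets_of_size {1..d} k)"
      using Par_part_range[OF M] by (auto simp: multisets_of_size_def)
  qed
  show "finite (\<Union>k\<le>d. multisets_of_size {1..d} k)" by blast
qed

section \<open>Counting occurrences of a part\<close>

text \<open>Partitions of d containing at least c copies of N correspond, by removing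
  those copies, to the partitions of d - c * N.\<close>
lemma card_Par_count_ge:
  assumes N: "1 \<le> N"
  shows "card {M\<in>Par d. c \<le> count M N} = (if c * N \<le> d then card (Par (d - c * N)) else 0)"
proof (cases "c * N \<le> d")
  case True
  let ?R = "replicate_mset c N"
  let ?A = "{M\<in>Par d. c \<le> count M N}"
  have "bij_betw (\<lambda>M. M - ?R) ?A (Par (d - c * N))"
  proof (rule bij_betw_byWitness[where f' = "\<lambda>M. M + ?R"])
    show "\<forall>M\<in>?A. M - ?R + ?R = M"
      by (auto simp: count_le_replicate_mset_subset_eq subset_mset.diff_add)
    show "\<forall>M\<in>Par (d - c * N). M + ?R - ?R = M" by simp
    show "(\<lambda>M. M - ?R) ` ?A \<subseteq> Par (d - c * N)"
    proof clarify
      fix M assume M: "M \<in> Par d" "c \<le> count M N"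
      then have "sum_mset (M - ?R) = d - c * N"
        unfolding Par_def
        by (subst sum_mset_diff) (auto simp: count_le_replicate_mset_subset_eq mult.commute)
      then show "M - ?R \<in> Par (d - c * N)"
        using M unfolding Par_def by (auto dest: in_diffD)
    qed
    show "(\<lambda>M. M + ?R) ` Par (d - c * N) \<subseteq> ?A"
      using True N unfolding Par_def by (auto simp: mult.commute split: if_splits)
  qed
  then show ?thesis using True by (simp add: bij_betw_same_card)
next
  case False
  then have empty: "{M\<in>Par d. c \<le> count M N} = {}"
    using Par_count_times_part_le mult_le_mono1 le_trans by blast
  show ?thesis unfolding empty using False by simp
qed

lemma card_Par_count_ge_scale:
  assumes "1 \<le> N" and "1 \<le> q"
  shows "card {M\<in>Par d. k * q \<le> count M N} = card {M\<in>Par d. k \<le> count M (q * N)}"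
  using assms by (simp add: card_Par_count_ge mult.assoc)

lemma div_eq_card_multiples:
  assumes "c \<le> d" and "1 \<le> q"
  shows "c div q = card {k\<in>{1..d}. k * q \<le> c}"
proof -
  have "k \<le> d" if "k * q \<le> c" for k
  proof -
    have "k \<le> k * q" using assms(2) by simp
    then show ?thesis using that assms(1) by linarith
  qed
  then have "{k\<in>{1..d}. k * q \<le> c} = {1..c div q}"
    using assms by (auto simp: less_eq_div_iff_mult_less_eq)
  then show ?thesis by simp
qed

lemma sum_div_eq_sum_card:
  assumes "finite A" and "\<And>x. x \<in> A \<Longrightarrow> f x \<le> d" and "1 \<le> q"
  shows "(\<Sum>x\<in>A. f x div q) = (\<Sum>k\<in>{1..d}. card {x\<in>A. k * q \<le> f x})"
proof -
  have "(\<Sum>x\<in>A. f x div q) = (\<Sum>x\<in>A. card {k\<in>{1..d}. k * q \<le> f x})"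
    using assms by (intro sum.cong refl div_eq_card_multiples) auto
  also have "\<dots> = (\<Sum>x\<in>A. \<Sum>k\<in>{1..d}. if k * q \<le> f x then 1 else 0)"
    by (simp add: sum.inter_filter[symmetric])
  also have "\<dots> = (\<Sum>k\<in>{1..d}. \<Sum>x\<in>A. if k * q \<le> f x then 1 else 0)"
    by (rule sum.swap)
  also have "\<dots> = (\<Sum>k\<in>{1..d}. card {x\<in>A. k * q \<le> f x})"
    using assms(1) by (simp add: sum.inter_filter[symmetric])
  finally show ?thesis .
qed

definition part_total :: "nat \<Rightarrow> nat \<Rightarrow> nat" where
  "part_total d N = (\<Sum>M\<in>Par d. count M N)"

lemma total_length_eq_sum_part_total: "total_length d = (\<Sum>N\<in>{1..d}. part_total d N)"
  unfolding total_length_def part_total_def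
  by (simp add: size_Par_eq_sum_count cong: sum.cong) (rule sum.swap)

lemma part_total_eq_0: "d < N \<Longrightarrow> part_total d N = 0"
  unfolding part_total_def
  by (intro sum.neutral ballI) (meson Par_part_range atLeastAtMost_iff count_inI leD)

lemma sum_count_div_eq_part_total:
  assumes "1 \<le> N" and "1 \<le> q"
  shows "(\<Sum>M\<in>Par d. count M N div q) = part_total d (q * N)"
proof -
  have "(\<Sum>M\<in>Par d. count M N div q) = (\<Sum>k\<in>{1..d}. card {M\<in>Par d. k * q \<le> count M N})"
    using assms by (intro sum_div_eq_sum_card finite_Par Par_count_le)
  also have "\<dots> = (\<Sum>k\<in>{1..d}. card {M\<in>Par d. k * 1 \<le> count M (q * N)})"
    using assms by (simp add: card_Par_count_ge_scale)
  also have "\<dots> = (\<Sum>M\<in>Par d. count M (q * N) div 1)"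
    by (intro sum_div_eq_sum_card[symmetric] finite_Par Par_count_le) auto
  finally show ?thesis by (simp add: part_total_def)
qed

lemma exponent_less_prime_power:
  assumes "prime (p::nat)"
  shows "j < p ^ j"
proof -
  have "j < 2 ^ j" by (rule less_exp)
  also have "\<dots> \<le> p ^ j" using prime_ge_2_nat[OF assms] by (simp add: power_mono)
  finally show ?thesis .
qed

lemma dp_eq_sum_upto:
  assumes p: "prime p" and c: "c \<le> d"
  shows "dp p c = (\<Sum>j\<in>{1..d}. c div p ^ j)"
  unfolding dp_def
proof (rule sum.mono_neutral_left)
  show "\<forall>j\<in>{1..d} - {1..c}. c div p ^ j = 0"
  proof
    fix j assume "j \<in> {1..d} - {1..c}"
    then have "c < j" by auto
    also have "\<dots> < p ^ j" by (rule exponent_less_prime_power[OF p])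
    finally show "c div p ^ j = 0" by simp
  qed
qed (use c in auto)

lemma sum_dp_count_eq:
  assumes p: "prime p" and n: "1 \<le> n"
  shows "(\<Sum>M\<in>Par d. dp p (count M n)) = (\<Sum>j\<in>{1..d}. part_total d (p ^ j * n))"
proof -
  have "(\<Sum>M\<in>Par d. dp p (count M n)) = (\<Sum>j\<in>{1..d}. \<Sum>M\<in>Par d. count M n div p ^ j)"
    by (simp add: dp_eq_sum_upto[OF p Par_count_le] cong: sum.cong) (rule sum.swap)
  also have "\<dots> = (\<Sum>j\<in>{1..d}. part_total d (p ^ j * n))"
    using p n by (intro sum.cong refl sum_count_div_eq_part_total)
                 (auto simp: Suc_le_eq prime_gt_0_nat)
  finally show ?thesis .
qed

definition theta_exponent :: "nat \<Rightarrow> nat \<Rightarrow> nat multiset \<Rightarrow> nat" where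
  "theta_exponent p r M = (\<Sum>n\<in>{n\<in>set_mset M. 1 \<le> n \<and> multiplicity p n < r}.
      (r - multiplicity p n) * count M n + dp p (count M n))"

lemma theta_eq_power: "theta p r M = p ^ theta_exponent p r M"
  unfolding theta_def theta_exponent_def by (simp add: power_sum)

lemma theta_exponent_Par:
  assumes "M \<in> Par d"
  shows "theta_exponent p r M = (\<Sum>n\<in>{n\<in>{1..d}. multiplicity p n < r}.
      (r - multiplicity p n) * count M n + dp p (count M n))"
  unfolding theta_exponent_def
proof (rule sum.mono_neutral_left)
  show "{n\<in>set_mset M. 1 \<le> n \<and> multiplicity p n < r} \<subseteq> {n\<in>{1..d}. multiplicity p n < r}"
    using Par_part_range[OF assms] by auto
  show "\<forall>n\<in>{n\<in>{1..d}. multiplicity p n < r} - {n\<in>set_mset M. 1 \<le> n \<and> multiplicity p n < r}.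
      (r - multiplicity p n) * count M n + dp p (count M n) = 0"
  proof
    fix n assume "n \<in> {n\<in>{1..d}. multiplicity p n < r} - {n\<in>set_mset M. 1 \<le> n \<and> multiplicity p n < r}"
    then have "count M n = 0" by (auto simp: not_in_iff)
    then show "(r - multiplicity p n) * count M n + dp p (count M n) = 0"
      by (simp add: dp_def)
  qed
qed simp

lemma sum_theta_exponent:
  assumes p: "prime p"
  shows "(\<Sum>M\<in>Par d. theta_exponent p r M) =
    (\<Sum>n\<in>{n\<in>{1..d}. multiplicity p n < r}.
      (r - multiplicity p n) * part_total d n + (\<Sum>j\<in>{1..d}. part_total d (p ^ j * n)))"
proof -
  have "(\<Sum>M\<in>Par d. theta_exponent p r M) = (\<Sum>n\<in>{n\<in>{1..d}. multiplicity p n < r}.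
      \<Sum>M\<in>Par d. (r - multiplicity p n) * count M n + dp p (count M n))"
    by (simp add: theta_exponent_Par cong: sum.cong) (rule sum.swap)
  then show ?thesis
    using p by (simp add: sum.distrib sum_distrib_left part_total_def sum_dp_count_eq)
qed

section \<open>Factorisations N = p^j * n\<close>

definition factorisations :: "nat \<Rightarrow> nat \<Rightarrow> nat \<Rightarrow> (nat \<times> nat) set" where
  "factorisations p r N = {(n, j). 1 \<le> j \<and> multiplicity p n < r \<and> p ^ j * n = N}"

lemma multiplicity_prime_power_mult:
  assumes "prime (p::nat)" and "n \<noteq> 0"
  shows "multiplicity p (p ^ j * n) = j + multiplicity p n"
  using assms by (simp add: prime_elem_multiplicity_mult_distrib prime_imp_prime_elem prime_gt_0_nat)

text \<open>A factorisation is determined by j, which ranges over the j \<le> v_p(N)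
  with v_p(N) - j < r: there are min (v_p N) r of them.\<close>
lemma card_factorisations:
  assumes p: "prime p" and N: "N \<noteq> 0"
  shows "card (factorisations p r N) = min (multiplicity p N) r"
proof -
  let ?v = "multiplicity p N"
  let ?J = "{?v + 1 - min ?v r..?v}"
  have p0: "p \<noteq> 0" using p by auto
  have "factorisations p r N = (\<lambda>j. (N div p ^ j, j)) ` ?J"
  proof (intro equalityI subsetI)
    fix x assume "x \<in> factorisations p r N"
    then obtain n j where x: "x = (n, j)" "1 \<le> j" "multiplicity p n < r" "p ^ j * n = N"
      unfolding factorisations_def by auto
    then have "?v = j + multiplicity p n"
      using multiplicity_prime_power_mult[OF p, of n j] N by auto
    then show "x \<in> (\<lambda>j. (N div p ^ j, j)) ` ?J"
      using x p0 by (auto intro!: image_eqI[where x = j])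
  next
    fix x assume "x \<in> (\<lambda>j. (N div p ^ j, j)) ` ?J"
    then obtain j where j: "j \<in> ?J" and x: "x = (N div p ^ j, j)" by blast
    have "p ^ j dvd N" using j N p by (intro multiplicity_dvd') auto
    then obtain n where n: "N = p ^ j * n" by blast
    then have "?v = j + multiplicity p n"
      using multiplicity_prime_power_mult[OF p, of n j] N by auto
    then show "x \<in> factorisations p r N"
      using j x n p0 unfolding factorisations_def by auto
  qed
  moreover have "inj_on (\<lambda>j. (N div p ^ j, j)) ?J" by (rule inj_onI) simp
  ultimately show ?thesis by (simp add: card_image)
qed

lemma sum_regroup_factorisations:
  assumes p: "prime p" and G: "\<And>N. d < N \<Longrightarrow> G N = (0::nat)"
  shows "(\<Sum>n\<in>{n\<in>{1..d}. multiplicity p n < r}. \<Sum>j\<in>{1..d}. G (p ^ j * n))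
       = (\<Sum>N\<in>{1..d}. min (multiplicity p N) r * G N)"
proof -
  let ?T = "{n\<in>{1..d}. multiplicity p n < r}"
  let ?h = "\<lambda>(n, j). p ^ j * n"
  let ?A = "{x\<in>?T \<times> {1..d}. ?h x \<le> d}"
  have pj: "1 \<le> p ^ j" for j using p by (simp add: Suc_le_eq prime_gt_0_nat)
  have fibre: "{x\<in>?A. ?h x = N} = factorisations p r N" if "N \<in> {1..d}" for N
  proof (intro equalityI subsetI)
    fix x assume "x \<in> factorisations p r N"
    then obtain n j where x: "x = (n, j)" "1 \<le> j" "multiplicity p n < r" "p ^ j * n = N"
      unfolding factorisations_def by auto
    have "j < p ^ j" by (rule exponent_less_prime_power[OF p])
    also have "\<dots> \<le> N" using x that by (cases n) auto
    finally have "j \<le> d" using that by simp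
    moreover have "n \<le> N" using pj[of j] x(4) by (metis mult_1 mult_le_mono1)
    ultimately show "x \<in> {x\<in>?A. ?h x = N}" using x that by (cases n) auto
  qed (auto simp: factorisations_def)
  have "(\<Sum>n\<in>?T. \<Sum>j\<in>{1..d}. G (p ^ j * n)) = (\<Sum>x\<in>?T \<times> {1..d}. G (?h x))"
    by (simp add: sum.cartesian_product case_prod_beta)
  also have "\<dots> = (\<Sum>x\<in>?A. G (?h x))"
  proof (rule sum.mono_neutral_right)
    show "\<forall>x\<in>?T \<times> {1..d} - ?A. G (?h x) = 0"
      using G by (auto simp: not_le)
  qed auto
  also have "\<dots> = (\<Sum>N\<in>{1..d}. \<Sum>x\<in>{x\<in>?A. ?h x = N}. G (?h x))"
  proof (rule sum.group[symmetric])
    show "?h ` ?A \<subseteq> {1..d}"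
      using p by (auto simp: Suc_le_eq prime_gt_0_nat)
  qed auto
  also have "\<dots> = (\<Sum>N\<in>{1..d}. card (factorisations p r N) * G N)"
  proof (rule sum.cong[OF refl])
    fix N assume N: "N \<in> {1..d}"
    have "(\<Sum>x\<in>{x\<in>?A. ?h x = N}. G (?h x)) = (\<Sum>x\<in>{x\<in>?A. ?h x = N}. G N)"
      by (rule sum.cong) auto
    also have "\<dots> = card {x\<in>?A. ?h x = N} * G N"
      by simp
    finally show "(\<Sum>x\<in>{x\<in>?A. ?h x = N}. G (?h x)) = card (factorisations p r N) * G N"
      by (simp only: fibre[OF N])
  qed
  also have "\<dots> = (\<Sum>N\<in>{1..d}. min (multiplicity p N) r * G N)"
    by (intro sum.cong refl) (simp add: card_factorisations[OF p])
  finally show ?thesis .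
qed

text \<open>Each N receives weight r - v_p(N) (which is 0 when v_p(N) \<ge> r) plus
  min (v_p N) r, i.e. exactly r.\<close>
lemma sum_weights:
  fixes p r d :: nat and F :: "nat \<Rightarrow> nat"
  shows "(\<Sum>n\<in>{n\<in>{1..d}. multiplicity p n < r}. (r - multiplicity p n) * F n)
     + (\<Sum>N\<in>{1..d}. min (multiplicity p N) r * F N) = r * (\<Sum>N\<in>{1..d}. F N)"
proof -
  have "(\<Sum>n\<in>{n\<in>{1..d}. multiplicity p n < r}. (r - multiplicity p n) * F n)
      = (\<Sum>n\<in>{1..d}. (r - multiplicity p n) * F n)"
    by (rule sum.mono_neutral_left) auto
  moreover have "(r - multiplicity p N) + min (multiplicity p N) r = r" for N
    by linarith
  ultimately show ?thesis
    by (simp add: sum.distrib[symmetric] sum_distrib_left add_mult_distrib[symmetric])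
qed

theorem proposition4p1:
  fixes p r d :: nat
  assumes "prime p" and "1 \<le> r"
  shows "(\<Prod>M\<in>Par d. theta p r M) = p ^ (r * total_length d)"
proof -
  let ?v = "multiplicity p"
  have "(\<Sum>M\<in>Par d. theta_exponent p r M)
      = (\<Sum>n\<in>{n\<in>{1..d}. ?v n < r}. (r - ?v n) * part_total d n)
        + (\<Sum>n\<in>{n\<in>{1..d}. ?v n < r}. \<Sum>j\<in>{1..d}. part_total d (p ^ j * n))"
    using sum_theta_exponent[OF \<open>prime p\<close>] by (simp add: sum.distrib)
  also have "\<dots> = (\<Sum>n\<in>{n\<in>{1..d}. ?v n < r}. (r - ?v n) * part_total d n)
        + (\<Sum>N\<in>{1..d}. min (?v N) r * part_total d N)"
    using sum_regroup_factorisations[OF \<open>prime p\<close> part_total_eq_0] by simp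
  also have "\<dots> = r * total_length d"
    using sum_weights[where F = "part_total d"] by (simp add: total_length_eq_sum_part_total)
  finally show ?thesis
    by (simp add: theta_eq_power flip: power_sum)
qed

end
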